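(* For every $q\in\mathbb{K}$, $(\mathcal{M}MR(q),\succ_q,\cdot_q,\prec_q)$ is a $q$-tridendriform algebra.
   Context: An $\mathcal M$-permutation (big multi-permutation) of $n$ is an ordered sequence $B=(B_1,\dots,B_m)$ of nonempty pairwise disjoint subsets of $[n]$ with union $[n]$ such that for every $1\le i\le n-1$, $i$ and $i+1$ do not lie in the same block. $S^{\mathcal M}_n$ is their set and $\mathcal MMR=\bigoplus_{n\ge1}\mathbb{K}[S^{\mathcal M}_n]$. Restriction: for an ordered set partition $W=(W_1,\dots,W_l)$ and a set $J$, $W|_J$ is $(W_1\cap J,\dots,W_l\cap J)$ with empty blocks deleted. $\mathcal M$-standardization: for an ordered sequence $C=(C_1,\dots,C_p)$ of nonempty pairwise disjoint finite subsets of $\mathbb{Z}_{>0}$, let $s_1<\dots<s_k$ be the elements of $\bigcup C_c$, let $w$ be the word with $w(t)=c$ iff $s_t\in C_c$, let $w'$ (of length $l$) be obtained from $w$ by deleting every letter equal to the letter immediately preceding it; then $\mathrm{std}_{\mathcal M}(C)=(w'^{-1}(1),\dots,w'^{-1}(p))\in S^{\mathcal M}_l$. (E.g. $\mathrm{std}_{\mathcal M}[(1,6,7),(2,3),5,4]=[(1,5),2,4,3]$, $\mathrm{std}_{\mathcal M}[(1,3)]=[1]$.) Products: let $B\in S^{\mathcal M}_n$, $D\in S^{\mathcal M}_m$. Let $\mathcal W(B,D)$ be the set of pairs $(W,S)$ where either (I) $W\in S^{\mathcal M}_{n+m}$, $S=\{n+1,\dots,n+m\}$, or (II) $W\in S^{\mathcal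 M}_{n+m-1}$, $S=\{n,\dots,n+m-1\}$, and in both cases $W|_{[n]}=B$ and $\mathrm{std}_{\mathcal M}(W|_S)=D$. For $W=(W_1,\dots,W_l)$ let $\cap^W_{B,D}$ be the number of blocks $W_j$ with $W_j\cap[n]\neq\emptyset$ and $W_j\cap S\neq\emptyset$. Then $B\succ_qD=\sum q^{\cap^W_{B,D}}W$ over $(W,S)\in\mathcal W(B,D)$ with $W_l\cap[n]=\emptyset$; $B\cdot_qD=\sum q^{\cap^W_{B,D}-1}W$ over those with $W_l\cap[n]\ne\emptyset$ and $W_l\cap S\ne\emptyset$; $B\prec_qD=\sum q^{\cap^W_{B,D}}W$ over those with $W_l\cap S=\emptyset$. $\mathcal MMR(q)$ denotes $\mathcal MMR$ with these products. $q$-tridendriform algebra: bilinear $\prec,\cdot,\succ$ with (1) $(a\prec b)\prec c=a\prec(b\prec c+b\succ c+q\,b\cdot c)$; (2) $(a\succ b)\prec c=a\succ(b\prec c)$; (3) $(a\prec b+a\succ b+q\,a\cdot b)\succ c=a\succ(b\succ c)$; (4) $(a\cdot b)\cdot c=a\cdot(b\cdot c)$; (5) $(a\succ b)\cdot c=a\succ(b\cdot c)$; (6) $(a\prec b)\cdot c=a\cdot(b\succ c)$; (7) $(a\cdot b)\prec c=a\cdot(b\prec c)$. *)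

theory Defs
  imports Main
begin

definition Mperm :: "nat \<Rightarrow> nat set list \<Rightarrow> bool" where
  "Mperm n B \<longleftrightarrow>
     (\<forall>X\<in>set B. X \<noteq> {}) \<and>
     (\<forall>i<length B. \<forall>j<length B. i \<noteq> j \<longrightarrow> B ! i \<inter> B ! j = {}) \<and>
     \<Union>(set B) = {1..n} \<and>
     (\<forall>i. 1 \<le> i \<and> i < n \<longrightarrow> \<not> (\<exists>X\<in>set B. i \<in> X \<and> Suc i \<in> X))"

definition restr :: "nat set list \<Rightarrow> nat set \<Rightarrow> nat set list" where
  "restr W J = filter (\<lambda>X. X \<noteq> {}) (map (\<lambda>X. X \<inter> J) W)"

fun destutter :: "nat list \<Rightarrow> nat list" where
  "destutter [] = []"
| "destutter [x] = [x]"
| "destutter (x # y # xs) =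
     (if x = y then destutter (y # xs) else x # destutter (y # xs))"

definition blk_idx :: "nat set list \<Rightarrow> nat \<Rightarrow> nat" where
  "blk_idx C s = (THE c. c < length C \<and> s \<in> C ! c)"

definition stdM :: "nat set list \<Rightarrow> nat set list" where
  "stdM C = (let w = map (blk_idx C) (sorted_list_of_set (\<Union>(set C)));
                 w' = destutter w
             in map (\<lambda>c. {t. 1 \<le> t \<and> t \<le> length w' \<and> w' ! (t - 1) = c}) [0..<length C])"

definition msize :: "nat set list \<Rightarrow> nat" where
  "msize B = card (\<Union>(set B))"

definition admissible :: "nat set list \<Rightarrow> nat set list \<Rightarrow> nat set list \<Rightarrow> nat \<Rightarrow> nat set \<Rightarrow> bool" where
  "admissible B D W N S \<longleftrightarrow>
     Mperm N W \<and> restr W {1..msize B} = B \<and> stdM (restr W S) = D"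

definition capn :: "nat set list \<Rightarrow> nat set list \<Rightarrow> nat set \<Rightarrow> nat" where
  "capn B W S = card {j. j < length W \<and> W ! j \<inter> {1..msize B} \<noteq> {} \<and> W ! j \<inter> S \<noteq> {}}"

definition Sset_I :: "nat set list \<Rightarrow> nat set list \<Rightarrow> nat set" where
  "Sset_I B D = {msize B + 1 .. msize B + msize D}"
definition Sset_II :: "nat set list \<Rightarrow> nat set list \<Rightarrow> nat set" where
  "Sset_II B D = {msize B .. msize B + msize D - 1}"

(* generic coefficient of W in a product of basis elements B and D:
   cond selects the condition on the last block, ex gives the exponent *)
definition coef_gen ::
  "(nat set list \<Rightarrow> nat set list \<Rightarrow> nat set \<Rightarrow> bool) \<Rightarrow> (nat \<Rightarrow> nat) \<Rightarrow> 'k::field \<Rightarrow>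
   nat set list \<Rightarrow> nat set list \<Rightarrow> nat set list \<Rightarrow> 'k" where
  "coef_gen cond ex q B D W =
     (if admissible B D W (msize B + msize D) (Sset_I B D) \<and> cond B W (Sset_I B D)
      then q ^ ex (capn B W (Sset_I B D)) else 0) +
     (if admissible B D W (msize B + msize D - 1) (Sset_II B D) \<and> cond B W (Sset_II B D)
      then q ^ ex (capn B W (Sset_II B D)) else 0)"

definition cond_succ :: "nat set list \<Rightarrow> nat set list \<Rightarrow> nat set \<Rightarrow> bool" where
  "cond_succ B W S \<longleftrightarrow> last W \<inter> {1..msize B} = {}"
definition cond_dot :: "nat set list \<Rightarrow> nat set list \<Rightarrow> nat set \<Rightarrow> bool" where
  "cond_dot B W S \<longleftrightarrow> last W \<inter> {1..msize B} \<noteq> {} \<and> last W \<inter> S \<noteq> {}"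
definition cond_prec :: "nat set list \<Rightarrow> nat set list \<Rightarrow> nat set \<Rightarrow> bool" where
  "cond_prec B W S \<longleftrightarrow> last W \<inter> S = {}"

(* elements of MMR: finitely supported K-valued functions on M-permutations of n >= 1 *)
definition supp :: "(nat set list \<Rightarrow> 'k::zero) \<Rightarrow> nat set list set" where
  "supp x = {B. x B \<noteq> 0}"

definition in_MMR :: "(nat set list \<Rightarrow> 'k::field) \<Rightarrow> bool" where
  "in_MMR x \<longleftrightarrow> finite (supp x) \<and> (\<forall>B\<in>supp x. \<exists>n\<ge>1. Mperm n B)"

definition bilin ::
  "(nat set list \<Rightarrow> nat set list \<Rightarrow> nat set list \<Rightarrow> 'k::field) \<Rightarrow>
   (nat set list \<Rightarrow> 'k) \<Rightarrow> (nat set list \<Rightarrow> 'k) \<Rightarrow> (nat set list \<Rightarrow> 'k)" where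
  "bilin f x y = (\<lambda>W. \<Sum>B\<in>supp x. \<Sum>D\<in>supp y. x B * y D * f B D W)"

definition succ_q :: "'k::field \<Rightarrow> (nat set list \<Rightarrow> 'k) \<Rightarrow> (nat set list \<Rightarrow> 'k) \<Rightarrow> (nat set list \<Rightarrow> 'k)" where
  "succ_q q = bilin (coef_gen cond_succ (\<lambda>c. c) q)"
definition dot_q :: "'k::field \<Rightarrow> (nat set list \<Rightarrow> 'k) \<Rightarrow> (nat set list \<Rightarrow> 'k) \<Rightarrow> (nat set list \<Rightarrow> 'k)" where
  "dot_q q = bilin (coef_gen cond_dot (\<lambda>c. c - 1) q)"
definition prec_q :: "'k::field \<Rightarrow> (nat set list \<Rightarrow> 'k) \<Rightarrow> (nat set list \<Rightarrow> 'k) \<Rightarrow> (nat set list \<Rightarrow> 'k)" where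
  "prec_q q = bilin (coef_gen cond_prec (\<lambda>c. c) q)"

definition vadd :: "(nat set list \<Rightarrow> 'k::field) \<Rightarrow> (nat set list \<Rightarrow> 'k) \<Rightarrow> (nat set list \<Rightarrow> 'k)" where
  "vadd x y = (\<lambda>W. x W + y W)"
definition vsmul :: "'k::field \<Rightarrow> (nat set list \<Rightarrow> 'k) \<Rightarrow> (nat set list \<Rightarrow> 'k)" where
  "vsmul c x = (\<lambda>W. c * x W)"

definition q_tridendriform ::
  "'k::field \<Rightarrow> ('v \<Rightarrow> bool) \<Rightarrow> ('v \<Rightarrow> 'v \<Rightarrow> 'v) \<Rightarrow> ('k \<Rightarrow> 'v \<Rightarrow> 'v) \<Rightarrow>
   ('v \<Rightarrow> 'v \<Rightarrow> 'v) \<Rightarrow> ('v \<Rightarrow> 'v \<Rightarrow> 'v) \<Rightarrow> ('v \<Rightarrow> 'v \<Rightarrow> 'v) \<Rightarrow> bool" where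
  "q_tridendriform q A add smul prec dot succ \<longleftrightarrow>
     (\<forall>a b c. A a \<and> A b \<and> A c \<longrightarrow>
        prec (prec a b) c = prec a (add (add (prec b c) (succ b c)) (smul q (dot b c))) \<and>
        prec (succ a b) c = succ a (prec b c) \<and>
        succ (add (add (prec a b) (succ a b)) (smul q (dot a b))) c = succ a (succ b c) \<and>
        dot (dot a b) c = dot a (dot b c) \<and>
        dot (succ a b) c = succ a (dot b c) \<and>
        dot (prec a b) c = dot a (succ b c) \<and>
        prec (dot a b) c = dot a (prec b c))"

end

theory Submission
  imports Defs
begin

(* All three products are bilinear extensions of coefficient functions on M-permutations, so
   each axiom reduces to an identity between double coefficients: for basis elements a, b, c
   and a target W, the sum over intermediate terms V of coef(a,b;V) * coef(V,c;W) equals the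
   sum over V of coef(b,c;V) * coef(a,V;W).  A coefficient is the sum of a type (I) and a type
   (II) part, with overlap e = 0 or 1.  For fixed overlaps both sides vanish unless W fits the
   triple, i.e. its restrictions to three consecutive intervals I1, I2, I3 standardize to a, b, c,
   and then the intermediate term is unique (W restricted to I1 \<union> I2, resp. the standardized
   restriction to I2 \<union> I3), because standardizing the restriction of an M-permutation to an
   interval is merely a shift.  The conditions on last blocks become conditions on which
   intervals the last block of W meets, and the exponents of q become counts of blocks meeting
   two unions of intervals, which satisfy an inclusion-exclusion identity. *)

definition disjoint_blocks :: "nat set list \<Rightarrow> bool" where
  "disjoint_blocks C \<longleftrightarrow> (\<forall>X\<in>set C. X \<noteq> {}) \<and>
     (\<forall>i<length C. \<forall>j<length C. i \<noteq> j \<longrightarrow> C ! i \<inter> C ! j = {})"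

(* Disjointness is symmetric, so it can be phrased with sorted_wrt, which is stable under
   map and filter. *)
lemma disjoint_blocks_sorted_wrt:
  "disjoint_blocks C \<longleftrightarrow> (\<forall>X\<in>set C. X \<noteq> {}) \<and> sorted_wrt (\<lambda>X Y. X \<inter> Y = {}) C"
proof -
  have "(\<forall>i<length C. \<forall>j<length C. i \<noteq> j \<longrightarrow> C ! i \<inter> C ! j = {}) \<longleftrightarrow>
        (\<forall>i j. i < j \<longrightarrow> j < length C \<longrightarrow> C ! i \<inter> C ! j = {})"
  proof (intro iffI allI impI)
    fix i j assume h: "\<forall>i j. i < j \<longrightarrow> j < length C \<longrightarrow> C ! i \<inter> C ! j = {}"
      and ij: "i < length C" "j < length C" "i \<noteq> j"
    then consider "i < j" | "j < i" by linarith
    thus "C ! i \<inter> C ! j = {}" using h ij by cases (auto simp: Int_commute)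
  qed auto
  thus ?thesis unfolding disjoint_blocks_def sorted_wrt_iff_nth_less by simp
qed

lemma disjoint_blocksD:
  assumes "disjoint_blocks C"
  shows "X \<in> set C \<Longrightarrow> X \<noteq> {}"
    and "i < length C \<Longrightarrow> j < length C \<Longrightarrow> i \<noteq> j \<Longrightarrow> C ! i \<inter> C ! j = {}"
  using assms unfolding disjoint_blocks_def by blast+

lemma disjoint_blocks_distinct: "disjoint_blocks C \<Longrightarrow> distinct C"
  unfolding disjoint_blocks_def distinct_conv_nth by (metis Int_absorb nth_mem)

definition interval_blocks :: "nat \<Rightarrow> nat \<Rightarrow> nat set list \<Rightarrow> bool" where
  "interval_blocks lo hi C \<longleftrightarrow> disjoint_blocks C \<and> \<Union>(set C) = {lo..hi} \<and>
     (\<forall>X\<in>set C. \<forall>i. i \<in> X \<longrightarrow> Suc i \<notin> X)"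

lemma Mperm_iff_interval_blocks: "Mperm n B \<longleftrightarrow> interval_blocks 1 n B"
proof -
  have consec: "(\<forall>i. 1 \<le> i \<and> i < n \<longrightarrow> \<not> (\<exists>X\<in>set B. i \<in> X \<and> Suc i \<in> X)) \<longleftrightarrow>
        (\<forall>X\<in>set B. \<forall>i. i \<in> X \<longrightarrow> Suc i \<notin> X)" if U: "\<Union>(set B) = {1..n}"
  proof -
    have "1 \<le> i \<and> i < n" if "X \<in> set B" "i \<in> X" "Suc i \<in> X" for X i
    proof -
      have "i \<in> {1..n}" "Suc i \<in> {1..n}" using that U by blast+
      thus ?thesis by simp
    qed
    thus ?thesis by (meson Suc_leI)
  qed
  show ?thesis
    unfolding Mperm_def interval_blocks_def disjoint_blocks_def conj_assoc
    by (rule conj_cong[OF refl], rule conj_cong[OF refl], rule conj_cong[OF refl], erule consec)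
qed

lemma restr_Nil [simp]: "restr [] J = []"
  by (simp add: restr_def)

lemma restr_Cons: "restr (X # W) J = (if X \<inter> J = {} then restr W J else (X \<inter> J) # restr W J)"
  by (simp add: restr_def)

lemma restr_append: "restr (xs @ ys) J = restr xs J @ restr ys J"
  by (simp add: restr_def)

lemma restr_block_subset: "Y \<in> set (restr W J) \<Longrightarrow> \<exists>X\<in>set W. Y \<subseteq> X"
  by (auto simp: restr_def)

lemma Union_restr: "\<Union>(set (restr W J)) = \<Union>(set W) \<inter> J"
  by (induction W) (auto simp: restr_Cons)

lemma restr_restr: "restr (restr W J) K = restr W (J \<inter> K)"
  by (induction W) (auto simp: restr_Cons Int_assoc)

lemma disjoint_blocks_restr:
  assumes "disjoint_blocks W"
  shows "disjoint_blocks (restr W J)"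
proof -
  have "sorted_wrt (\<lambda>X Y. X \<inter> J \<inter> (Y \<inter> J) = {}) W"
    using assms unfolding disjoint_blocks_sorted_wrt by (auto elim: sorted_wrt_mono_rel[rotated])
  thus ?thesis
    unfolding disjoint_blocks_sorted_wrt restr_def by (auto simp: sorted_wrt_map intro: sorted_wrt_filter)
qed

lemma last_restr:
  assumes "W \<noteq> []" "last W \<inter> J \<noteq> {}"
  shows "restr W J \<noteq> []" and "last (restr W J) = last W \<inter> J"
proof -
  have "W = butlast W @ [last W]" using assms(1) by simp
  then have "restr W J = restr (butlast W) J @ [last W \<inter> J]"
    using assms(2) by (metis restr_append restr_Cons restr_Nil)
  thus "restr W J \<noteq> []" and "last (restr W J) = last W \<inter> J" by simp_all
qed

lemma interval_blocks_restr:
  assumes "interval_blocks lo hi C" "lo \<le> lo'" "hi' \<le> hi"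
  shows "interval_blocks lo' hi' (restr C {lo'..hi'})"
proof -
  have dC: "disjoint_blocks C" and UC: "\<Union>(set C) = {lo..hi}"
    and sep: "\<And>X i. X \<in> set C \<Longrightarrow> i \<in> X \<Longrightarrow> Suc i \<notin> X"
    using assms(1) by (auto simp: interval_blocks_def)
  show ?thesis unfolding interval_blocks_def
  proof (intro conjI ballI allI impI)
    show "disjoint_blocks (restr C {lo'..hi'})" using dC by (rule disjoint_blocks_restr)
    show "\<Union>(set (restr C {lo'..hi'})) = {lo'..hi'}"
      unfolding Union_restr UC using assms(2,3) by auto
  next
    fix Y i assume "Y \<in> set (restr C {lo'..hi'})" "i \<in> Y"
    moreover obtain X where "X \<in> set C" "Y \<subseteq> X"
      using restr_block_subset[OF \<open>Y \<in> _\<close>] by blast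
    ultimately show "Suc i \<notin> Y" using sep by blast
  qed
qed

definition shift :: "nat \<Rightarrow> nat set list \<Rightarrow> nat set list" where
  "shift k C = map (\<lambda>X. (\<lambda>t. t - k) ` X) C"

lemma shift_0 [simp]: "shift 0 C = C"
  by (simp add: shift_def)

lemma shift_shift: "shift a (shift b C) = shift (b + a) C"
  by (simp add: shift_def image_image diff_diff_left)

lemma last_shift: "C \<noteq> [] \<Longrightarrow> last (shift k C) = (\<lambda>t. t - k) ` last C"
  by (simp add: shift_def last_map)

lemma restr_shift: "restr (shift k C) K = shift k (restr C {t. t - k \<in> K})"
proof (induction C)
  case (Cons X C)
  have "(\<lambda>t. t - k) ` X \<inter> K = (\<lambda>t. t - k) ` (X \<inter> {t. t - k \<in> K})" by auto
  with Cons show ?case by (simp add: shift_def restr_Cons)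
qed (simp add: shift_def)

(* Shifting a split of {lo..hi} down by k < lo gives a split of {lo-k..hi-k}:
   translation is injective there and preserves consecutiveness. *)
lemma interval_blocks_shift:
  assumes C: "interval_blocks lo hi C" and k: "k < lo"
  shows "interval_blocks (lo - k) (hi - k) (shift k C)"
proof -
  let ?f = "\<lambda>t::nat. t - k"
  have dC: "disjoint_blocks C" and UC: "\<Union>(set C) = {lo..hi}"
    and sep: "\<And>X i. X \<in> set C \<Longrightarrow> i \<in> X \<Longrightarrow> Suc i \<notin> X"
    using C by (auto simp: interval_blocks_def)
  have inj: "inj_on ?f {lo..hi}" by (rule inj_on_diff_nat) (use k in auto)
  have sub: "X \<subseteq> {lo..hi}" if "X \<in> set C" for X using UC that by blast
  have disj: "?f ` (C ! i) \<inter> ?f ` (C ! j) = {}"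
    if "i < length C" "j < length C" "i \<noteq> j" for i j
  proof -
    have "?f ` (C ! i) \<inter> ?f ` (C ! j) = ?f ` (C ! i \<inter> C ! j)"
      using inj sub[OF nth_mem[OF that(1)]] sub[OF nth_mem[OF that(2)]] by (simp add: inj_on_image_Int)
    thus ?thesis using disjoint_blocksD(2)[OF dC that] by simp
  qed
  have img: "?f ` {lo..hi} = {lo - k..hi - k}"
  proof safe
    fix x assume "x \<in> {lo - k..hi - k}"
    then have "x = ?f (x + k)" "x + k \<in> {lo..hi}" using k by auto
    thus "x \<in> ?f ` {lo..hi}" by blast
  qed auto
  have no_consec: "Suc i \<notin> ?f ` X" if X: "X \<in> set C" and i: "i \<in> ?f ` X" for X i
  proof
    assume "Suc i \<in> ?f ` X"
    then obtain z where z: "z \<in> X" "Suc i = z - k" by blast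
    obtain y where y: "y \<in> X" "i = y - k" using i by blast
    have "lo \<le> y" "lo \<le> z" using sub[OF X] y(1) z(1) by auto
    then have "z = Suc y" using y(2) z(2) k by linarith
    thus False using sep X y(1) z(1) by blast
  qed
  show ?thesis unfolding interval_blocks_def
  proof (intro conjI ballI allI)
    show "disjoint_blocks (shift k C)" unfolding disjoint_blocks_def
    proof (intro conjI ballI allI impI)
      fix Y assume "Y \<in> set (shift k C)"
      then obtain X where "X \<in> set C" "Y = ?f ` X" by (auto simp: shift_def)
      thus "Y \<noteq> {}" using disjoint_blocksD(1)[OF dC] by blast
    next
      fix i j assume "i < length (shift k C)" "j < length (shift k C)" "i \<noteq> j"
      thus "shift k C ! i \<inter> shift k C ! j = {}" using disj by (simp add: shift_def)
    qed
    have "\<Union>(set (shift k C)) = ?f ` \<Union>(set C)" by (auto simp: shift_def)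
    thus "\<Union>(set (shift k C)) = {lo - k..hi - k}" using UC img by simp
  next
    fix Y i assume "Y \<in> set (shift k C)"
    then obtain X where "X \<in> set C" "Y = ?f ` X" by (auto simp: shift_def)
    thus "i \<in> Y \<longrightarrow> Suc i \<notin> Y" using no_consec by blast
  qed
qed

lemma blk_idx:
  assumes "disjoint_blocks C" "s \<in> \<Union>(set C)"
  shows "blk_idx C s < length C" and "c < length C \<Longrightarrow> blk_idx C s = c \<longleftrightarrow> s \<in> C ! c"
proof -
  obtain c' where c': "c' < length C" "s \<in> C ! c'"
    using assms(2) by (auto simp: in_set_conv_nth)
  have uniq: "d = c'" if "d < length C" "s \<in> C ! d" for d
    using disjoint_blocksD(2)[OF assms(1) that(1) c'(1)] that(2) c'(2) by blast
  have "blk_idx C s = c'" unfolding blk_idx_def by (rule the_equality) (use c' uniq in blast)+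
  thus "blk_idx C s < length C" and "c < length C \<Longrightarrow> blk_idx C s = c \<longleftrightarrow> s \<in> C ! c"
    using uniq[of c] c' by auto
qed

lemma destutter_id: "successively (\<noteq>) xs \<Longrightarrow> destutter xs = xs"
  by (induction xs rule: destutter.induct) auto

(* The word read off by M-standardization from a split of {lo..hi}: the block index of each
   position, in increasing order. *)
definition interval_word :: "nat \<Rightarrow> nat \<Rightarrow> nat set list \<Rightarrow> nat list" where
  "interval_word lo hi C = map (blk_idx C) [lo..<Suc hi]"

lemma interval_word_nth:
  assumes "interval_blocks lo hi C" "i < length (interval_word lo hi C)"
  shows "lo + i \<in> \<Union>(set C)" and "interval_word lo hi C ! i = blk_idx C (lo + i)"
  using assms by (auto simp: interval_word_def interval_blocks_def simp del: upt_Suc)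

(* Consecutive positions lie in different blocks, so standardization deletes no letter. *)
lemma destutter_interval_word:
  assumes C: "interval_blocks lo hi C"
  shows "destutter (interval_word lo hi C) = interval_word lo hi C"
proof (intro destutter_id, unfold successively_conv_nth, intro allI impI)
  let ?w = "interval_word lo hi C"
  fix i assume i: "Suc i < length ?w"
  then have i': "i < length ?w" by simp
  have dC: "disjoint_blocks C" using C by (simp add: interval_blocks_def)
  define c where "c = ?w ! i"
  have c: "c < length C" "lo + i \<in> C ! c"
    using blk_idx[OF dC interval_word_nth(1)[OF C i']] interval_word_nth(2)[OF C i']
    by (auto simp: c_def)
  show "?w ! i \<noteq> ?w ! Suc i"
  proof
    assume "?w ! i = ?w ! Suc i"
    then have "Suc (lo + i) \<in> C ! c"
      using blk_idx(2)[OF dC interval_word_nth(1)[OF C i] c(1)] interval_word_nth(2)[OF C i]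
      unfolding c_def by simp
    thus False using C c nth_mem[OF c(1)] by (auto simp: interval_blocks_def)
  qed
qed

lemma interval_word_positions:
  assumes C: "interval_blocks lo hi C" and lo: "1 \<le> lo" "lo \<le> hi" and c: "c < length C"
  shows "{t. 1 \<le> t \<and> t \<le> length (interval_word lo hi C) \<and> interval_word lo hi C ! (t - 1) = c} =
         (\<lambda>t. t - (lo - 1)) ` (C ! c)"
proof -
  let ?w = "interval_word lo hi C"
  have dC: "disjoint_blocks C" and UC: "\<Union>(set C) = {lo..hi}"
    using C by (auto simp: interval_blocks_def)
  have lw: "length ?w = hi + 1 - lo" unfolding interval_word_def using lo by simp
  have sub: "C ! c \<subseteq> {lo..hi}" using c UC by (metis Union_upper nth_mem)
  have char: "?w ! (t - 1) = c \<longleftrightarrow> lo + (t - 1) \<in> C ! c" if "1 \<le> t" "t \<le> length ?w" for t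
  proof -
    have "t - 1 < length ?w" using that by simp
    thus ?thesis by (simp only: interval_word_nth[OF C] blk_idx(2)[OF dC _ c])
  qed
  show ?thesis
  proof (intro equalityI subsetI)
    fix t assume "t \<in> {t. 1 \<le> t \<and> t \<le> length ?w \<and> ?w ! (t - 1) = c}"
    then have t: "1 \<le> t" "lo + (t - 1) \<in> C ! c" using char by auto
    moreover have "t = (lo + (t - 1)) - (lo - 1)" using t(1) lo by simp
    ultimately show "t \<in> (\<lambda>t. t - (lo - 1)) ` (C ! c)" by blast
  next
    fix t assume "t \<in> (\<lambda>t. t - (lo - 1)) ` (C ! c)"
    then obtain s where s: "s \<in> C ! c" "t = s - (lo - 1)" by blast
    moreover have "s \<in> {lo..hi}" using sub s(1) by blast
    ultimately have t: "1 \<le> t" "t \<le> length ?w" "lo + (t - 1) = s" using lo lw by auto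
    moreover have "?w ! (t - 1) = c" by (simp only: char[OF t(1,2)] t(3) s(1))
    ultimately show "t \<in> {t. 1 \<le> t \<and> t \<le> length ?w \<and> ?w ! (t - 1) = c}" by blast
  qed
qed

lemma stdM_interval_blocks:
  assumes C: "interval_blocks lo hi C" and lo: "1 \<le> lo" "lo \<le> hi"
  shows "stdM C = shift (lo - 1) C"
proof -
  have UC: "\<Union>(set C) = {lo..hi}" using C by (simp add: interval_blocks_def)
  have sl: "sorted_list_of_set {lo..hi} = [lo..<Suc hi]"
    by (metis atLeastLessThanSuc_atLeastAtMost sorted_list_of_set_range)
  show ?thesis
    unfolding stdM_def Let_def UC sl interval_word_def[symmetric] destutter_interval_word[OF C]
    by (rule nth_equalityI) (use interval_word_positions[OF C lo] in \<open>simp_all add: shift_def\<close>)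
qed

lemma Mperm_restr_interval:
  assumes "Mperm N W" "1 \<le> lo" "hi \<le> N"
  shows "Mperm (hi + 1 - lo) (shift (lo - 1) (restr W {lo..hi}))"
proof -
  have "interval_blocks lo hi (restr W {lo..hi})"
    using assms by (intro interval_blocks_restr[of 1 N]) (auto simp: Mperm_iff_interval_blocks)
  from interval_blocks_shift[OF this, of "lo - 1"] show ?thesis
    using assms(2) by (simp add: Mperm_iff_interval_blocks)
qed

lemma stdM_restr_interval:
  assumes "Mperm N W" "1 \<le> lo" "lo \<le> hi" "hi \<le> N"
  shows "stdM (restr W {lo..hi}) = shift (lo - 1) (restr W {lo..hi})"
proof -
  have "interval_blocks lo hi (restr W {lo..hi})"
    using assms by (intro interval_blocks_restr[of 1 N]) (auto simp: Mperm_iff_interval_blocks)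
  thus ?thesis using assms(2,3) by (rule stdM_interval_blocks)
qed

definition meet_count :: "nat set list \<Rightarrow> nat set \<Rightarrow> nat set \<Rightarrow> nat" where
  "meet_count W X Y = length (filter (\<lambda>Z. Z \<inter> X \<noteq> {} \<and> Z \<inter> Y \<noteq> {}) W)"

lemma capn_meet_count: "capn B W S = meet_count W {1..msize B} S"
  by (simp add: capn_def meet_count_def length_filter_conv_card)

lemma meet_count_restr: "X \<subseteq> J \<Longrightarrow> Y \<subseteq> J \<Longrightarrow> meet_count (restr W J) X Y = meet_count W X Y"
proof (induction W)
  case (Cons Z W)
  have "Z \<inter> J \<inter> X = Z \<inter> X" "Z \<inter> J \<inter> Y = Z \<inter> Y" using Cons.prems by auto
  with Cons show ?case by (auto simp: meet_count_def restr_Cons)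
qed (simp add: meet_count_def)

lemma meet_count_shift:
  "meet_count (shift k C) X Y = meet_count C {t. t - k \<in> X} {t. t - k \<in> Y}"
proof (induction C)
  case (Cons Z C)
  have "((\<lambda>t. t - k) ` Z \<inter> X = {}) = (Z \<inter> {t. t - k \<in> X} = {})" for X by auto
  with Cons.IH show ?case unfolding meet_count_def shift_def by simp
qed (simp add: meet_count_def shift_def)

lemma meet_count_cong:
  "\<Union>(set W) \<subseteq> U \<Longrightarrow> X \<inter> U = X' \<inter> U \<Longrightarrow> Y \<inter> U = Y' \<inter> U \<Longrightarrow>
   meet_count W X Y = meet_count W X' Y'"
proof (induction W)
  case (Cons Z W)
  have "Z \<inter> X = Z \<inter> X'" "Z \<inter> Y = Z \<inter> Y'" using Cons.prems by auto
  moreover have "meet_count W X Y = meet_count W X' Y'" using Cons.prems by (intro Cons.IH) auto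
  ultimately show ?case by (simp add: meet_count_def)
qed (simp add: meet_count_def)

(* The inclusion-exclusion identity behind the agreement of the q-exponents of both
   bracketings: blockwise it is  ab + (a \<or> b)c = bc + a(b \<or> c)  for truth values a, b, c. *)
lemma meet_count_assoc:
  "meet_count W A B + meet_count W (A \<union> B) C = meet_count W B C + meet_count W A (B \<union> C)"
  by (induction W) (auto simp: meet_count_def Int_Un_distrib)

lemma meet_count_pos:
  assumes "W \<noteq> []" "last W \<inter> X \<noteq> {}" "last W \<inter> Y \<noteq> {}"
  shows "1 \<le> meet_count W X Y"
proof -
  have "W = butlast W @ [last W]" using assms(1) by simp
  then have "meet_count W X Y = meet_count (butlast W) X Y + meet_count [last W] X Y"
    unfolding meet_count_def by (metis filter_append length_append)
  thus ?thesis using assms by (simp add: meet_count_def)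
qed

lemma msize_Mperm: "Mperm n W \<Longrightarrow> msize W = n"
  by (simp add: Mperm_def msize_def)

lemma Mperm_last:
  assumes "Mperm n W" "1 \<le> n"
  shows "W \<noteq> []" and "last W \<noteq> {}" and "last W \<subseteq> {1..n}"
proof -
  show "W \<noteq> []" using assms by (auto simp: Mperm_def)
  then have "last W \<in> set W" by simp
  thus "last W \<noteq> {}" and "last W \<subseteq> {1..n}" using assms(1) by (auto simp: Mperm_def)
qed

lemma finite_Mperm: "finite {W. Mperm n W}"
proof -
  let ?L = "{xs. set xs \<subseteq> Pow {1..n} \<and> length xs \<le> card (Pow {1..n::nat})}"
  have "{W. Mperm n W} \<subseteq> ?L"
  proof safe
    fix W assume m: "Mperm n W"
    show "x \<in> {1..n}" if "X \<in> set W" "x \<in> X" for X x using m that by (auto simp: Mperm_def)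
    have "distinct W"
      using m by (intro disjoint_blocks_distinct) (simp add: Mperm_iff_interval_blocks interval_blocks_def)
    then have "length W = card (set W)" by (simp add: distinct_card)
    also have "\<dots> \<le> card (Pow {1..n})" using m by (intro card_mono) (auto simp: Mperm_def)
    finally show "length W \<le> card (Pow {1..n})" .
  qed
  moreover have "finite ?L" by (intro finite_lists_length_le) auto
  ultimately show ?thesis by (rule finite_subset)
qed

(* The positions of the second factor in a product of sizes n and m:
   {n+1..n+m} in case (I), e = 0, and {n..n+m-1} in case (II), e = 1. *)
definition second_range :: "nat \<Rightarrow> nat \<Rightarrow> nat \<Rightarrow> nat set" where
  "second_range e n m = {n + 1 - e .. n + m - e}"

definition coef_part ::
  "nat \<Rightarrow> (nat set list \<Rightarrow> nat set list \<Rightarrow> nat set \<Rightarrow> bool) \<Rightarrow> (nat \<Rightarrow> nat) \<Rightarrow> 'k::field \<Rightarrow>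
   nat set list \<Rightarrow> nat set list \<Rightarrow> nat set list \<Rightarrow> 'k" where
  "coef_part e cond ex q B D W =
     (let S = second_range e (msize B) (msize D)
      in if admissible B D W (msize B + msize D - e) S \<and> cond B W S then q ^ ex (capn B W S) else 0)"

lemma coef_gen_split: "coef_gen cond ex q B D W = coef_part 0 cond ex q B D W + coef_part 1 cond ex q B D W"
proof -
  have "Sset_I B D = second_range 0 (msize B) (msize D)"
    "Sset_II B D = second_range 1 (msize B) (msize D)"
    by (simp_all add: Sset_I_def Sset_II_def second_range_def)
  thus ?thesis by (simp add: coef_gen_def coef_part_def Let_def)
qed

definition candidates :: "nat set list \<Rightarrow> nat set list \<Rightarrow> nat set list set" where
  "candidates B D = {V. Mperm (msize B + msize D) V} \<union> {V. Mperm (msize B + msize D - 1) V}"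

lemma finite_candidates: "finite (candidates B D)"
  by (simp add: candidates_def finite_Mperm)

(* Three basis elements a, b, c of sizes n1, n2, n3, and overlaps e1 (between a and b) and
   e2 (between ab and c), each 0 for a pair of type (I) and 1 for type (II).  A target W of
   size N is then cut into three consecutive intervals I1 = {1..n1}, I2, I3 carrying a, b, c;
   J = I2 \<union> I3 carries bc. *)
locale triple =
  fixes a b c :: "nat set list" and n1 n2 n3 e1 e2 :: nat
  assumes Mperm_a: "Mperm n1 a" and Mperm_b: "Mperm n2 b" and Mperm_c: "Mperm n3 c"
    and pos: "1 \<le> n1" "1 \<le> n2" "1 \<le> n3"
    and overlaps: "e1 \<le> 1" "e2 \<le> 1"
begin

definition "n12 = n1 + n2 - e1"
definition "n23 = n2 + n3 - e2"
definition "N = n12 + n3 - e2"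
definition "k = n1 - e1"
definition "I1 = {1..n1}"
definition "I2 = second_range e1 n1 n2"
definition "I3 = second_range e2 n12 n3"
definition "J = second_range e1 n1 n23"

definition "fits W \<longleftrightarrow> Mperm N W \<and> restr W I1 = a \<and> stdM (restr W I2) = b \<and> stdM (restr W I3) = c"

(* The intermediate term through which W arises in (ab)c, resp. in a(bc). *)
definition "left_mid W = restr W {1..n12}"
definition "right_mid W = stdM (restr W J)"

lemma msize_a: "msize a = n1" using Mperm_a by (rule msize_Mperm)
lemma msize_b: "msize b = n2" using Mperm_b by (rule msize_Mperm)
lemma msize_c: "msize c = n3" using Mperm_c by (rule msize_Mperm)

lemma N_alt: "n1 + n23 - e1 = N"
  using pos overlaps unfolding N_def n12_def n23_def by auto
lemma n12_le: "1 \<le> n12" "n12 \<le> N"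
  unfolding n12_def N_def using pos overlaps by auto
lemma k_lo: "n1 + 1 - e1 - 1 = k"
  unfolding k_def using pos by simp
lemma I2_interval: "I2 = {n1 + 1 - e1 .. n12}"
  unfolding I2_def second_range_def n12_def by simp
lemma I3_interval: "I3 = {n12 + 1 - e2 .. N}"
  unfolding I3_def second_range_def N_def by simp
lemma J_interval: "J = {n1 + 1 - e1 .. N}"
  unfolding J_def second_range_def N_alt by simp
lemma J_un: "J = I2 \<union> I3"
  unfolding J_interval I2_interval I3_interval n12_def N_def using pos overlaps by auto
lemma I12_un: "{1..n12} = I1 \<union> I2"
  unfolding I1_def I2_interval n12_def using pos overlaps by auto
lemma I123_un: "{1..N} = I1 \<union> I2 \<union> I3"
  unfolding I1_def I2_interval I3_interval n12_def N_def using pos overlaps by auto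
lemma I_sub: "I1 \<subseteq> I1 \<union> I2" "I2 \<subseteq> I1 \<union> I2" "I2 \<subseteq> J" "I3 \<subseteq> J"
  by (auto simp: J_un)

lemma J_b: "J \<inter> {t. t - k \<in> {1..n2}} = I2"
  unfolding J_interval I2_interval k_def n12_def N_def using pos overlaps by auto
lemma J_c: "J \<inter> {t. t - k \<in> second_range e2 n2 n3} = I3"
  unfolding J_interval I3_interval k_def n12_def N_def second_range_def using pos overlaps by auto

lemma left_mid_Mperm: "Mperm N W \<Longrightarrow> Mperm n12 (left_mid W)"
  using Mperm_restr_interval[of N W 1 n12] n12_le unfolding left_mid_def by simp

lemma right_mid_eq: "Mperm N W \<Longrightarrow> right_mid W = shift k (restr W J)"
  using stdM_restr_interval[of N W "n1 + 1 - e1" N] pos overlaps unfolding right_mid_def J_interval k_lo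
  by (simp add: N_def n12_def)

lemma right_mid_Mperm: "Mperm N W \<Longrightarrow> Mperm n23 (right_mid W)"
  using Mperm_restr_interval[of N W "n1 + 1 - e1" N] pos overlaps right_mid_eq unfolding J_interval k_lo
  by (simp add: N_def n12_def n23_def)

lemma stdM_I2: "Mperm N W \<Longrightarrow> stdM (restr W I2) = shift k (restr W I2)"
  using stdM_restr_interval[of N W "n1 + 1 - e1" n12] pos overlaps n12_le unfolding I2_interval k_lo
  by (simp add: n12_def)

lemma stdM_I3: "Mperm N W \<Longrightarrow> stdM (restr W I3) = shift (n12 - e2) (restr W I3)"
  using stdM_restr_interval[of N W "n12 + 1 - e2" N] pos overlaps n12_le unfolding I3_interval
  by (simp add: n12_def N_def)

lemma right_mid_b: "Mperm N W \<Longrightarrow> restr (right_mid W) {1..n2} = shift k (restr W I2)"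
  by (simp only: right_mid_eq restr_shift restr_restr J_b)

lemma right_mid_c:
  assumes W: "Mperm N W"
  shows "stdM (restr (right_mid W) (second_range e2 n2 n3)) = shift (n12 - e2) (restr W I3)"
proof -
  have "stdM (restr (right_mid W) (second_range e2 n2 n3)) =
        shift (n2 - e2) (restr (right_mid W) (second_range e2 n2 n3))"
    using stdM_restr_interval[OF right_mid_Mperm[OF W], of "n2 + 1 - e2" n23] pos overlaps
    unfolding second_range_def n23_def by simp
  also have "\<dots> = shift (n2 - e2) (shift k (restr W I3))"
    using W by (simp only: right_mid_eq restr_shift restr_restr J_c)
  also have "\<dots> = shift (n12 - e2) (restr W I3)"
    unfolding shift_shift k_def n12_def using pos overlaps by (simp add: algebra_simps)
  finally show ?thesis .
qed

lemma left_adm: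
  "admissible a b V n12 I2 \<and> admissible V c W (msize V + n3 - e2) (second_range e2 (msize V) n3) \<longleftrightarrow>
   fits W \<and> V = left_mid W"
proof
  assume h: "admissible a b V n12 I2 \<and> admissible V c W (msize V + n3 - e2) (second_range e2 (msize V) n3)"
  have mv: "msize V = n12" using h by (auto simp: admissible_def intro: msize_Mperm)
  have W: "Mperm N W" using h mv by (simp add: admissible_def N_def)
  have V: "V = left_mid W" using h mv by (simp add: admissible_def left_mid_def)
  have r: "restr V I1 = restr W I1" "restr V I2 = restr W I2"
    unfolding V left_mid_def restr_restr I12_un by (simp_all add: Int_absorb1)
  have "restr W I1 = a" using h r by (simp add: admissible_def msize_a I1_def)
  moreover have "stdM (restr W I2) = b" using h r by (simp add: admissible_def)
  moreover have "stdM (restr W I3) = c" using h mv by (simp add: admissible_def I3_def)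
  ultimately show "fits W \<and> V = left_mid W" using W V by (simp add: fits_def)
next
  assume h: "fits W \<and> V = left_mid W"
  then have W: "Mperm N W" and V: "V = left_mid W" by (auto simp: fits_def)
  have mv: "msize V = n12" using left_mid_Mperm[OF W] V by (simp add: msize_Mperm)
  have r: "restr V I1 = restr W I1" "restr V I2 = restr W I2"
    unfolding V left_mid_def restr_restr I12_un by (simp_all add: Int_absorb1)
  have "Mperm n12 V" using left_mid_Mperm[OF W] V by simp
  moreover have "restr V {1..msize a} = a" using r h by (simp add: fits_def msize_a I1_def)
  moreover have "stdM (restr V I2) = b" using r h by (simp add: fits_def)
  moreover have "Mperm (msize V + n3 - e2) W" using W mv by (simp add: N_def)
  moreover have "restr W {1..msize V} = V" using V mv by (simp add: left_mid_def)
  moreover have "stdM (restr W (second_range e2 (msize V) n3)) = c"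
    using h mv by (simp add: fits_def I3_def)
  ultimately show "admissible a b V n12 I2 \<and>
      admissible V c W (msize V + n3 - e2) (second_range e2 (msize V) n3)"
    unfolding admissible_def msize_a by simp
qed

lemma right_adm:
  "admissible b c V n23 (second_range e2 n2 n3) \<and>
   admissible a V W (n1 + msize V - e1) (second_range e1 n1 (msize V)) \<longleftrightarrow>
   fits W \<and> V = right_mid W"
proof
  assume h: "admissible b c V n23 (second_range e2 n2 n3) \<and>
    admissible a V W (n1 + msize V - e1) (second_range e1 n1 (msize V))"
  have mv: "msize V = n23" using h by (auto simp: admissible_def intro: msize_Mperm)
  have W: "Mperm N W" using h mv by (simp add: admissible_def N_alt)
  have V: "V = right_mid W" using h mv by (simp add: admissible_def right_mid_def J_def)
  have "restr W I1 = a" using h by (simp add: admissible_def msize_a I1_def)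
  moreover have "stdM (restr W I2) = b"
    using h V right_mid_b[OF W] stdM_I2[OF W] by (simp add: admissible_def msize_b)
  moreover have "stdM (restr W I3) = c"
    using h V right_mid_c[OF W] stdM_I3[OF W] by (simp add: admissible_def msize_b)
  ultimately show "fits W \<and> V = right_mid W" using W V by (simp add: fits_def)
next
  assume h: "fits W \<and> V = right_mid W"
  then have W: "Mperm N W" and V: "V = right_mid W" by (auto simp: fits_def)
  have mv: "msize V = n23" using right_mid_Mperm[OF W] V by (simp add: msize_Mperm)
  show "admissible b c V n23 (second_range e2 n2 n3) \<and>
    admissible a V W (n1 + msize V - e1) (second_range e1 n1 (msize V))"
    unfolding admissible_def mv msize_a msize_b N_alt J_def[symmetric]
  proof (intro conjI)
    show "Mperm n23 V" using right_mid_Mperm[OF W] V by simp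
    show "restr V {1..n2} = b" using V right_mid_b[OF W] stdM_I2[OF W] h by (simp add: fits_def)
    show "stdM (restr V (second_range e2 n2 n3)) = c"
      using V right_mid_c[OF W] stdM_I3[OF W] h by (simp add: fits_def)
    show "Mperm N W" by (rule W)
    show "restr W {1..n1} = a" using h by (simp add: fits_def I1_def)
    show "stdM (restr W J) = V" using V by (simp add: right_mid_def)
  qed
qed

lemma fits_Mperm: "fits W \<Longrightarrow> Mperm N W"
  by (simp add: fits_def)

lemma fits_nonnil: "fits W \<Longrightarrow> W \<noteq> []"
  using Mperm_last(1)[of N W] n12_le by (auto simp: fits_def)

lemma fits_last_meets: "fits W \<Longrightarrow> last W \<inter> I1 \<noteq> {} \<or> last W \<inter> I2 \<noteq> {} \<or> last W \<inter> I3 \<noteq> {}"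
  using Mperm_last(2,3)[of N W] n12_le I123_un by (auto simp: fits_def)

lemma left_mid_restr: "left_mid W = restr W (I1 \<union> I2)"
  unfolding left_mid_def I12_un ..

lemma msize_left_mid: "fits W \<Longrightarrow> msize (left_mid W) = n12"
  by (intro msize_Mperm left_mid_Mperm fits_Mperm)

lemma msize_right_mid: "fits W \<Longrightarrow> msize (right_mid W) = n23"
  by (intro msize_Mperm right_mid_Mperm fits_Mperm)

lemma last_left_mid:
  "fits W \<Longrightarrow> last W \<inter> (I1 \<union> I2) \<noteq> {} \<Longrightarrow> last (left_mid W) = last W \<inter> (I1 \<union> I2)"
  unfolding left_mid_restr by (intro last_restr(2) fits_nonnil)

lemma last_right_mid:
  "fits W \<Longrightarrow> last W \<inter> (I2 \<union> I3) \<noteq> {} \<Longrightarrow> last (right_mid W) = (\<lambda>t. t - k) ` (last W \<inter> J)"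
  using right_mid_eq[OF fits_Mperm] last_shift last_restr fits_nonnil J_un by metis

lemma last_right_mid_meets:
  assumes "fits W" "last W \<inter> (I2 \<union> I3) \<noteq> {}"
  shows "last (right_mid W) \<inter> {1..n2} = {} \<longleftrightarrow> last W \<inter> I2 = {}"
    and "last (right_mid W) \<inter> second_range e2 n2 n3 = {} \<longleftrightarrow> last W \<inter> I3 = {}"
proof -
  have shifted: "(\<lambda>t::nat. t - k) ` X \<inter> K = {} \<longleftrightarrow> X \<inter> {t. t - k \<in> K} = {}" for X K by auto
  show "last (right_mid W) \<inter> {1..n2} = {} \<longleftrightarrow> last W \<inter> I2 = {}"
    unfolding last_right_mid[OF assms] shifted Int_assoc J_b ..
  show "last (right_mid W) \<inter> second_range e2 n2 n3 = {} \<longleftrightarrow> last W \<inter> I3 = {}"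
    unfolding last_right_mid[OF assms] shifted Int_assoc J_c ..
qed

(* For the inner products this is only determined when
   the last block of W meets the relevant intervals. *)
lemma cond_left_outer:
  assumes "fits W"
  shows "cond_succ (left_mid W) W I3 \<longleftrightarrow> last W \<inter> I1 = {} \<and> last W \<inter> I2 = {}"
    and "cond_prec (left_mid W) W I3 \<longleftrightarrow> last W \<inter> I3 = {}"
    and "cond_dot (left_mid W) W I3 \<longleftrightarrow> (last W \<inter> I1 \<noteq> {} \<or> last W \<inter> I2 \<noteq> {}) \<and> last W \<inter> I3 \<noteq> {}"
  using assms by (auto simp: cond_succ_def cond_prec_def cond_dot_def msize_left_mid I12_un[simplified])

lemma cond_left_inner:
  assumes "fits W" "last W \<inter> (I1 \<union> I2) \<noteq> {}"
  shows "cond_succ a (left_mid W) I2 \<longleftrightarrow> last W \<inter> I1 = {}"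
    and "cond_prec a (left_mid W) I2 \<longleftrightarrow> last W \<inter> I2 = {}"
    and "cond_dot a (left_mid W) I2 \<longleftrightarrow> last W \<inter> I1 \<noteq> {} \<and> last W \<inter> I2 \<noteq> {}"
  using assms by (auto simp: cond_succ_def cond_prec_def cond_dot_def last_left_mid msize_a I1_def)

lemma cond_right_outer:
  shows "cond_succ a W J \<longleftrightarrow> last W \<inter> I1 = {}"
    and "cond_prec a W J \<longleftrightarrow> last W \<inter> I2 = {} \<and> last W \<inter> I3 = {}"
    and "cond_dot a W J \<longleftrightarrow> last W \<inter> I1 \<noteq> {} \<and> (last W \<inter> I2 \<noteq> {} \<or> last W \<inter> I3 \<noteq> {})"
  by (auto simp: cond_succ_def cond_prec_def cond_dot_def msize_a I1_def J_un)

lemma cond_right_inner: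
  assumes "fits W" "last W \<inter> (I2 \<union> I3) \<noteq> {}"
  shows "cond_succ b (right_mid W) (second_range e2 n2 n3) \<longleftrightarrow> last W \<inter> I2 = {}"
    and "cond_prec b (right_mid W) (second_range e2 n2 n3) \<longleftrightarrow> last W \<inter> I3 = {}"
    and "cond_dot b (right_mid W) (second_range e2 n2 n3) \<longleftrightarrow> last W \<inter> I2 \<noteq> {} \<and> last W \<inter> I3 \<noteq> {}"
  using last_right_mid_meets[OF assms]
  by (simp_all add: cond_succ_def cond_prec_def cond_dot_def msize_b)

lemmas cond_translation = cond_left_outer cond_left_inner cond_right_outer cond_right_inner
  Int_Un_distrib

lemma capn_translation:
  assumes "fits W"
  shows "capn a (left_mid W) I2 = meet_count W I1 I2"
    and "capn (left_mid W) W I3 = meet_count W (I1 \<union> I2) I3"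
    and "capn b (right_mid W) (second_range e2 n2 n3) = meet_count W I2 I3"
    and "capn a W J = meet_count W I1 (I2 \<union> I3)"
proof -
  show "capn a (left_mid W) I2 = meet_count W I1 I2"
    unfolding capn_meet_count msize_a left_mid_restr I1_def[symmetric] by (intro meet_count_restr I_sub)
  show "capn (left_mid W) W I3 = meet_count W (I1 \<union> I2) I3"
    using assms by (simp add: capn_meet_count msize_left_mid I12_un[simplified])
  show "capn a W J = meet_count W I1 (I2 \<union> I3)"
    by (simp add: capn_meet_count msize_a I1_def J_un)
  have "capn b (right_mid W) (second_range e2 n2 n3) =
        meet_count (restr W J) {t. t - k \<in> {1..n2}} {t. t - k \<in> second_range e2 n2 n3}"
    by (simp add: capn_meet_count msize_b right_mid_eq[OF fits_Mperm[OF assms]] meet_count_shift)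
  also have "\<dots> = meet_count (restr W J) I2 I3"
    by (rule meet_count_cong[where U = J]) (use J_b J_c I_sub in \<open>auto simp: Union_restr\<close>)
  also have "\<dots> = meet_count W I2 I3" by (intro meet_count_restr I_sub)
  finally show "capn b (right_mid W) (second_range e2 n2 n3) = meet_count W I2 I3" .
qed

lemma candidates_ab: "{V. Mperm n12 V} \<subseteq> candidates a b"
  using overlaps unfolding candidates_def n12_def msize_a msize_b by (cases e1) auto

lemma candidates_bc: "{V. Mperm n23 V} \<subseteq> candidates b c"
  using overlaps unfolding candidates_def n23_def msize_b msize_c by (cases e2) auto

lemma collapse_left:
  "(\<Sum>V\<in>candidates a b. coef_part e1 cg exg q a b V * coef_part e2 cf exf q V c W) =
   (if fits W \<and> cg a (left_mid W) I2 \<and> cf (left_mid W) W I3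
    then q ^ (exg (capn a (left_mid W) I2) + exf (capn (left_mid W) W I3)) else 0)"
proof -
  define h where "h V = (if fits W \<and> cg a V I2 \<and> cf V W (second_range e2 (msize V) n3)
     then q ^ (exg (capn a V I2) + exf (capn V W (second_range e2 (msize V) n3))) else 0)" for V
  have single: "coef_part e1 cg exg q a b V * coef_part e2 cf exf q V c W =
      (if V = left_mid W then h V else 0)" for V
  proof -
    have c1: "coef_part e1 cg exg q a b V =
        (if admissible a b V n12 I2 \<and> cg a V I2 then q ^ exg (capn a V I2) else 0)"
      unfolding coef_part_def Let_def msize_a msize_b n12_def I2_def ..
    have c2: "coef_part e2 cf exf q V c W =
        (if admissible V c W (msize V + n3 - e2) (second_range e2 (msize V) n3) \<and>
            cf V W (second_range e2 (msize V) n3)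
         then q ^ exf (capn V W (second_range e2 (msize V) n3)) else 0)"
      unfolding coef_part_def Let_def msize_c ..
    show ?thesis unfolding c1 c2 h_def using left_adm[of V W] by (auto simp: power_add)
  qed
  have "(\<Sum>V\<in>candidates a b. coef_part e1 cg exg q a b V * coef_part e2 cf exf q V c W) =
        (if left_mid W \<in> candidates a b then h (left_mid W) else 0)"
    unfolding single by (simp add: sum.delta finite_candidates)
  also have "\<dots> = h (left_mid W)"
    using candidates_ab left_mid_Mperm[OF fits_Mperm] by (auto simp: h_def)
  also have "\<dots> = (if fits W \<and> cg a (left_mid W) I2 \<and> cf (left_mid W) W I3
      then q ^ (exg (capn a (left_mid W) I2) + exf (capn (left_mid W) W I3)) else 0)"
    unfolding h_def using msize_left_mid by (auto simp: I3_def)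
  finally show ?thesis .
qed

lemma collapse_right:
  "(\<Sum>V\<in>candidates b c. coef_part e2 cg exg q b c V * coef_part e1 cf exf q a V W) =
   (if fits W \<and> cg b (right_mid W) (second_range e2 n2 n3) \<and> cf a W J
    then q ^ (exg (capn b (right_mid W) (second_range e2 n2 n3)) + exf (capn a W J)) else 0)"
proof -
  define h where "h V = (if fits W \<and> cg b V (second_range e2 n2 n3) \<and> cf a W (second_range e1 n1 (msize V))
     then q ^ (exg (capn b V (second_range e2 n2 n3)) + exf (capn a W (second_range e1 n1 (msize V))))
     else 0)" for V
  have single: "coef_part e2 cg exg q b c V * coef_part e1 cf exf q a V W =
      (if V = right_mid W then h V else 0)" for V
  proof -
    have c1: "coef_part e2 cg exg q b c V =
        (if admissible b c V n23 (second_range e2 n2 n3) \<and> cg b V (second_range e2 n2 n3)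
         then q ^ exg (capn b V (second_range e2 n2 n3)) else 0)"
      unfolding coef_part_def Let_def msize_c msize_b n23_def ..
    have c2: "coef_part e1 cf exf q a V W =
        (if admissible a V W (n1 + msize V - e1) (second_range e1 n1 (msize V)) \<and>
            cf a W (second_range e1 n1 (msize V))
         then q ^ exf (capn a W (second_range e1 n1 (msize V))) else 0)"
      unfolding coef_part_def Let_def msize_a ..
    show ?thesis unfolding c1 c2 h_def using right_adm[of V W] by (auto simp: power_add)
  qed
  have "(\<Sum>V\<in>candidates b c. coef_part e2 cg exg q b c V * coef_part e1 cf exf q a V W) =
        (if right_mid W \<in> candidates b c then h (right_mid W) else 0)"
    unfolding single by (simp add: sum.delta finite_candidates)
  also have "\<dots> = h (right_mid W)"
    using candidates_bc right_mid_Mperm[OF fits_Mperm] by (auto simp: h_def)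
  also have "\<dots> = (if fits W \<and> cg b (right_mid W) (second_range e2 n2 n3) \<and> cf a W J
      then q ^ (exg (capn b (right_mid W) (second_range e2 n2 n3)) + exf (capn a W J)) else 0)"
    unfolding h_def by (auto simp: msize_right_mid J_def)
  finally show ?thesis .
qed

lemma bracketings_agree:
  assumes "\<And>W. fits W \<Longrightarrow>
      (cgL a (left_mid W) I2 \<and> cfL (left_mid W) W I3 \<longleftrightarrow>
       cgR b (right_mid W) (second_range e2 n2 n3) \<and> cfR a W J) \<and>
      (cgL a (left_mid W) I2 \<and> cfL (left_mid W) W I3 \<longrightarrow>
       exgL (meet_count W I1 I2) + exfL (meet_count W (I1 \<union> I2) I3) =
       exgR (meet_count W I2 I3) + exfR (meet_count W I1 (I2 \<union> I3)))"
  shows "(\<Sum>V\<in>candidates a b. coef_part e1 cgL exgL q a b V * coef_part e2 cfL exfL q V c W) =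
         (\<Sum>V\<in>candidates b c. coef_part e2 cgR exgR q b c V * coef_part e1 cfR exfR q a V W)"
  unfolding collapse_left collapse_right using assms[of W] by (auto simp: capn_translation)

lemma last_block_facts:
  assumes "fits W"
  shows "last W \<inter> I1 \<noteq> {} \<or> last W \<inter> I2 \<noteq> {} \<or> last W \<inter> I3 \<noteq> {}"
    and "last W \<inter> X \<noteq> {} \<Longrightarrow> last W \<inter> Y \<noteq> {} \<Longrightarrow> 1 \<le> meet_count W X Y"
    and "meet_count W I1 I2 + meet_count W (I1 \<union> I2) I3 =
         meet_count W I2 I3 + meet_count W I1 (I2 \<union> I3)"
  using fits_last_meets[OF assms] meet_count_pos[OF fits_nonnil[OF assms]] meet_count_assoc
  by blast+

(* The seven axioms on basis coefficients, for fixed overlaps; the unconditional coefficient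
   (\<lambda>_ _ _. True) is that of x \<prec> y + x \<succ> y + q x \<cdot> y (see coef_part_total below). *)

lemma prec_prec:
  "(\<Sum>V\<in>candidates a b. coef_part e1 cond_prec (\<lambda>c. c) q a b V * coef_part e2 cond_prec (\<lambda>c. c) q V c W) =
   (\<Sum>V\<in>candidates b c. coef_part e2 (\<lambda>_ _ _. True) (\<lambda>c. c) q b c V * coef_part e1 cond_prec (\<lambda>c. c) q a V W)"
  apply (rule bracketings_agree)
  subgoal for W using last_block_facts[of W]
    by (cases "last W \<inter> I1 = {}"; cases "last W \<inter> I2 = {}"; cases "last W \<inter> I3 = {}")
      (auto simp: cond_translation)
  done

lemma succ_prec:
  "(\<Sum>V\<in>candidates a b. coef_part e1 cond_succ (\<lambda>c. c) q a b V * coef_part e2 cond_prec (\<lambda>c. c) q V c W) =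
   (\<Sum>V\<in>candidates b c. coef_part e2 cond_prec (\<lambda>c. c) q b c V * coef_part e1 cond_succ (\<lambda>c. c) q a V W)"
  apply (rule bracketings_agree)
  subgoal for W using last_block_facts[of W]
    by (cases "last W \<inter> I1 = {}"; cases "last W \<inter> I2 = {}"; cases "last W \<inter> I3 = {}")
      (auto simp: cond_translation)
  done

lemma total_succ:
  "(\<Sum>V\<in>candidates a b. coef_part e1 (\<lambda>_ _ _. True) (\<lambda>c. c) q a b V * coef_part e2 cond_succ (\<lambda>c. c) q V c W) =
   (\<Sum>V\<in>candidates b c. coef_part e2 cond_succ (\<lambda>c. c) q b c V * coef_part e1 cond_succ (\<lambda>c. c) q a V W)"
  apply (rule bracketings_agree)
  subgoal for W using last_block_facts[of W]
    by (cases "last W \<inter> I1 = {}"; cases "last W \<inter> I2 = {}"; cases "last W \<inter> I3 = {}")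
      (auto simp: cond_translation)
  done

lemma dot_dot:
  "(\<Sum>V\<in>candidates a b. coef_part e1 cond_dot (\<lambda>c. c - 1) q a b V * coef_part e2 cond_dot (\<lambda>c. c - 1) q V c W) =
   (\<Sum>V\<in>candidates b c. coef_part e2 cond_dot (\<lambda>c. c - 1) q b c V * coef_part e1 cond_dot (\<lambda>c. c - 1) q a V W)"
  apply (rule bracketings_agree)
  subgoal for W using last_block_facts[of W]
    by (cases "last W \<inter> I1 = {}"; cases "last W \<inter> I2 = {}"; cases "last W \<inter> I3 = {}")
      (auto simp: cond_translation)
  done

lemma succ_dot:
  "(\<Sum>V\<in>candidates a b. coef_part e1 cond_succ (\<lambda>c. c) q a b V * coef_part e2 cond_dot (\<lambda>c. c - 1) q V c W) =
   (\<Sum>V\<in>candidates b c. coef_part e2 cond_dot (\<lambda>c. c - 1) q b c V * coef_part e1 cond_succ (\<lambda>c. c) q a V W)"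
  apply (rule bracketings_agree)
  subgoal for W using last_block_facts[of W]
    by (cases "last W \<inter> I1 = {}"; cases "last W \<inter> I2 = {}"; cases "last W \<inter> I3 = {}")
      (auto simp: cond_translation)
  done

lemma prec_dot:
  "(\<Sum>V\<in>candidates a b. coef_part e1 cond_prec (\<lambda>c. c) q a b V * coef_part e2 cond_dot (\<lambda>c. c - 1) q V c W) =
   (\<Sum>V\<in>candidates b c. coef_part e2 cond_succ (\<lambda>c. c) q b c V * coef_part e1 cond_dot (\<lambda>c. c - 1) q a V W)"
  apply (rule bracketings_agree)
  subgoal for W using last_block_facts[of W]
    by (cases "last W \<inter> I1 = {}"; cases "last W \<inter> I2 = {}"; cases "last W \<inter> I3 = {}")
      (auto simp: cond_translation)
  done

lemma dot_prec:
  "(\<Sum>V\<in>candidates a b. coef_part e1 cond_dot (\<lambda>c. c - 1) q a b V * coef_part e2 cond_prec (\<lambda>c. c) q V c W) =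
   (\<Sum>V\<in>candidates b c. coef_part e2 cond_prec (\<lambda>c. c) q b c V * coef_part e1 cond_dot (\<lambda>c. c - 1) q a V W)"
  apply (rule bracketings_agree)
  subgoal for W using last_block_facts[of W]
    by (cases "last W \<inter> I1 = {}"; cases "last W \<inter> I2 = {}"; cases "last W \<inter> I3 = {}")
      (auto simp: cond_translation)
  done

end

definition basis :: "nat set list set" where
  "basis = {B. \<exists>n\<ge>1. Mperm n B}"

lemma in_MMR_iff: "in_MMR x \<longleftrightarrow> finite (supp x) \<and> supp x \<subseteq> basis"
  by (auto simp: in_MMR_def basis_def)

lemma basis_Mperm: "B \<in> basis \<Longrightarrow> Mperm (msize B) B"
  by (auto simp: basis_def msize_Mperm)

lemma basis_msize: "B \<in> basis \<Longrightarrow> 1 \<le> msize B"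
  by (auto simp: basis_def msize_Mperm)

lemma candidates_basis:
  assumes "B \<in> basis" "D \<in> basis"
  shows "candidates B D \<subseteq> basis"
proof -
  have "1 \<le> msize B + msize D" "1 \<le> msize B + msize D - 1"
    using basis_msize[OF assms(1)] basis_msize[OF assms(2)] by auto
  thus ?thesis unfolding candidates_def basis_def by blast
qed

lemma coef_gen_candidates: "coef_gen cond ex q B D V \<noteq> 0 \<Longrightarrow> V \<in> candidates B D"
  by (auto simp: coef_gen_def admissible_def candidates_def split: if_splits)

lemma bilin_superset:
  assumes "finite A" "supp x \<subseteq> A" "finite C" "supp y \<subseteq> C"
  shows "bilin f x y W = (\<Sum>B\<in>A. \<Sum>D\<in>C. x B * y D * f B D W)"
proof -
  have "bilin f x y W = (\<Sum>B\<in>supp x. \<Sum>D\<in>C. x B * y D * f B D W)"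
    unfolding bilin_def
    by (intro sum.cong refl sum.mono_neutral_left) (use assms in \<open>auto simp: supp_def\<close>)
  also have "\<dots> = (\<Sum>B\<in>A. \<Sum>D\<in>C. x B * y D * f B D W)"
    by (intro sum.mono_neutral_left) (use assms in \<open>auto simp: supp_def\<close>)
  finally show ?thesis .
qed

lemma bilin_cong_basis:
  assumes "in_MMR x" "in_MMR y" "\<And>B D. B \<in> basis \<Longrightarrow> D \<in> basis \<Longrightarrow> f B D = g B D"
  shows "bilin f x y = bilin g x y"
proof
  fix W
  have "supp x \<subseteq> basis" "supp y \<subseteq> basis" using assms(1,2) by (auto simp: in_MMR_iff)
  then have "f B D = g B D" if "B \<in> supp x" "D \<in> supp y" for B D
    using assms(3) that by blast
  then show "bilin f x y W = bilin g x y W" unfolding bilin_def by (intro sum.cong refl) simp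
qed

lemma vadd_bilin: "vadd (bilin f x y) (bilin g x y) = bilin (\<lambda>B D W. f B D W + g B D W) x y"
  by (simp add: vadd_def bilin_def sum.distrib distrib_left)

lemma vsmul_bilin: "vsmul q (bilin f x y) = bilin (\<lambda>B D W. q * f B D W) x y"
  by (simp add: vsmul_def bilin_def sum_distrib_left mult_ac)

lemma supp_bilin:
  assumes g: "\<And>B D V. g B D V \<noteq> 0 \<Longrightarrow> V \<in> candidates B D"
  shows "supp (bilin g x y) \<subseteq> (\<Union>B\<in>supp x. \<Union>D\<in>supp y. candidates B D)"
proof
  fix V assume "V \<in> supp (bilin g x y)"
  then have "(\<Sum>B\<in>supp x. \<Sum>D\<in>supp y. x B * y D * g B D V) \<noteq> 0"
    by (simp add: supp_def bilin_def)
  then obtain B D where "B \<in> supp x" "D \<in> supp y" "g B D V \<noteq> 0"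
    by (metis (no_types, lifting) mult_zero_right sum.neutral)
  thus "V \<in> (\<Union>B\<in>supp x. \<Union>D\<in>supp y. candidates B D)" using g by blast
qed

lemma in_MMR_bilin:
  assumes g: "\<And>B D V. g B D V \<noteq> 0 \<Longrightarrow> V \<in> candidates B D"
    and x: "in_MMR x" and y: "in_MMR y"
  shows "in_MMR (bilin g x y)"
proof -
  let ?A = "\<Union>B\<in>supp x. \<Union>D\<in>supp y. candidates B D"
  have h: "finite (supp x)" "supp x \<subseteq> basis" "finite (supp y)" "supp y \<subseteq> basis"
    using x y by (auto simp: in_MMR_iff)
  have "finite ?A" using h by (simp add: finite_candidates)
  moreover have "?A \<subseteq> basis" using h candidates_basis by blast
  moreover have "supp (bilin g x y) \<subseteq> ?A" by (rule supp_bilin[of g x y, OF g])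
  ultimately show ?thesis unfolding in_MMR_iff by (blast intro: finite_subset)
qed

lemma sum_swap4:
  "(\<Sum>V\<in>A. \<Sum>E\<in>Z. \<Sum>B\<in>X. \<Sum>D\<in>Y. (F V E B D::'a::comm_monoid_add)) =
   (\<Sum>B\<in>X. \<Sum>D\<in>Y. \<Sum>E\<in>Z. \<Sum>V\<in>A. F V E B D)"
proof -
  have "(\<Sum>V\<in>A. \<Sum>E\<in>Z. \<Sum>B\<in>X. \<Sum>D\<in>Y. F V E B D) = (\<Sum>V\<in>A. \<Sum>B\<in>X. \<Sum>D\<in>Y. \<Sum>E\<in>Z. F V E B D)"
    by (intro sum.cong refl) (subst sum.swap, intro sum.cong refl, rule sum.swap)
  also have "\<dots> = (\<Sum>B\<in>X. \<Sum>D\<in>Y. \<Sum>V\<in>A. \<Sum>E\<in>Z. F V E B D)"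
    by (subst sum.swap) (intro sum.cong refl, rule sum.swap)
  also have "\<dots> = (\<Sum>B\<in>X. \<Sum>D\<in>Y. \<Sum>E\<in>Z. \<Sum>V\<in>A. F V E B D)"
    by (intro sum.cong refl) (rule sum.swap)
  finally show ?thesis .
qed

lemma sum_swap3:
  "(\<Sum>V\<in>A. \<Sum>D\<in>Y. \<Sum>E\<in>Z. (F V D E::'a::comm_monoid_add)) = (\<Sum>D\<in>Y. \<Sum>E\<in>Z. \<Sum>V\<in>A. F V D E)"
  by (subst sum.swap) (intro sum.cong refl, rule sum.swap)

lemma bilin_left_expand:
  assumes g: "\<And>B D V. g B D V \<noteq> 0 \<Longrightarrow> V \<in> candidates B D"
    and x: "in_MMR x" and y: "in_MMR y" and z: "in_MMR z"
  shows "bilin f (bilin g x y) z W =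
    (\<Sum>B\<in>supp x. \<Sum>D\<in>supp y. \<Sum>E\<in>supp z.
       x B * y D * z E * (\<Sum>V\<in>candidates B D. g B D V * f V E W))"
proof -
  let ?A = "\<Union>B\<in>supp x. \<Union>D\<in>supp y. candidates B D"
  have fin: "finite (supp x)" "finite (supp y)" "finite (supp z)"
    using x y z by (auto simp: in_MMR_def)
  have fA: "finite ?A" using fin by (simp add: finite_candidates)
  have "bilin f (bilin g x y) z W = (\<Sum>V\<in>?A. \<Sum>E\<in>supp z. bilin g x y V * z E * f V E W)"
    by (rule bilin_superset) (use fA supp_bilin[of g x y, OF g] fin in auto)
  also have "\<dots> = (\<Sum>V\<in>?A. \<Sum>E\<in>supp z. \<Sum>B\<in>supp x. \<Sum>D\<in>supp y.
      x B * y D * z E * (g B D V * f V E W))"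
    unfolding bilin_def by (intro sum.cong refl) (simp add: sum_distrib_right sum_distrib_left mult_ac)
  also have "\<dots> = (\<Sum>B\<in>supp x. \<Sum>D\<in>supp y. \<Sum>E\<in>supp z. \<Sum>V\<in>?A.
      x B * y D * z E * (g B D V * f V E W))"
    by (rule sum_swap4)
  also have "\<dots> = (\<Sum>B\<in>supp x. \<Sum>D\<in>supp y. \<Sum>E\<in>supp z.
      x B * y D * z E * (\<Sum>V\<in>candidates B D. g B D V * f V E W))"
  proof (intro sum.cong refl)
    fix B D E assume "B \<in> supp x" "D \<in> supp y"
    then have restrict: "(\<Sum>V\<in>?A. g B D V * f V E W) = (\<Sum>V\<in>candidates B D. g B D V * f V E W)"
      using g by (intro sum.mono_neutral_right fA) auto
    thus "(\<Sum>V\<in>?A. x B * y D * z E * (g B D V * f V E W)) =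
        x B * y D * z E * (\<Sum>V\<in>candidates B D. g B D V * f V E W)"
      by (simp only: restrict[symmetric] sum_distrib_left)
  qed
  finally show ?thesis .
qed

lemma bilin_right_expand:
  assumes g: "\<And>B D V. g B D V \<noteq> 0 \<Longrightarrow> V \<in> candidates B D"
    and x: "in_MMR x" and y: "in_MMR y" and z: "in_MMR z"
  shows "bilin f x (bilin g y z) W =
    (\<Sum>B\<in>supp x. \<Sum>D\<in>supp y. \<Sum>E\<in>supp z.
       x B * y D * z E * (\<Sum>V\<in>candidates D E. g D E V * f B V W))"
proof -
  let ?A = "\<Union>D\<in>supp y. \<Union>E\<in>supp z. candidates D E"
  have fin: "finite (supp x)" "finite (supp y)" "finite (supp z)"
    using x y z by (auto simp: in_MMR_def)
  have fA: "finite ?A" using fin by (simp add: finite_candidates)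
  have "bilin f x (bilin g y z) W = (\<Sum>B\<in>supp x. \<Sum>V\<in>?A. x B * bilin g y z V * f B V W)"
    by (rule bilin_superset) (use fA supp_bilin[of g y z, OF g] fin in auto)
  also have "\<dots> = (\<Sum>B\<in>supp x. \<Sum>V\<in>?A. \<Sum>D\<in>supp y. \<Sum>E\<in>supp z.
      x B * y D * z E * (g D E V * f B V W))"
    unfolding bilin_def by (intro sum.cong refl) (simp add: sum_distrib_right sum_distrib_left mult_ac)
  also have "\<dots> = (\<Sum>B\<in>supp x. \<Sum>D\<in>supp y. \<Sum>E\<in>supp z. \<Sum>V\<in>?A.
      x B * y D * z E * (g D E V * f B V W))"
    by (rule sum.cong[OF refl], rule sum_swap3)
  also have "\<dots> = (\<Sum>B\<in>supp x. \<Sum>D\<in>supp y. \<Sum>E\<in>supp z.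
      x B * y D * z E * (\<Sum>V\<in>candidates D E. g D E V * f B V W))"
  proof (intro sum.cong refl)
    fix B D E assume "D \<in> supp y" "E \<in> supp z"
    then have restrict: "(\<Sum>V\<in>?A. g D E V * f B V W) = (\<Sum>V\<in>candidates D E. g D E V * f B V W)"
      using g by (intro sum.mono_neutral_right fA) auto
    thus "(\<Sum>V\<in>?A. x B * y D * z E * (g D E V * f B V W)) =
        x B * y D * z E * (\<Sum>V\<in>candidates D E. g D E V * f B V W)"
      by (simp only: restrict[symmetric] sum_distrib_left)
  qed
  finally show ?thesis .
qed

lemma triple_basis:
  "B \<in> basis \<Longrightarrow> D \<in> basis \<Longrightarrow> E \<in> basis \<Longrightarrow> e1 \<le> 1 \<Longrightarrow> e2 \<le> 1 \<Longrightarrow>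
   triple B D E (msize B) (msize D) (msize E) e1 e2"
  using basis_msize[of B] basis_msize[of D] basis_msize[of E]
  by unfold_locales (auto intro: basis_Mperm)

lemma bilin_assoc:
  assumes x: "in_MMR x" and y: "in_MMR y" and z: "in_MMR z"
    and basic: "\<And>B D E e1 e2 W. triple B D E (msize B) (msize D) (msize E) e1 e2 \<Longrightarrow>
      (\<Sum>V\<in>candidates B D. coef_part e1 gL exgL q B D V * coef_part e2 fL exfL q V E W) =
      (\<Sum>V\<in>candidates D E. coef_part e2 gR exgR q D E V * coef_part e1 fR exfR q B V W)"
  shows "bilin (coef_gen fL exfL q) (bilin (coef_gen gL exgL q) x y) z =
         bilin (coef_gen fR exfR q) x (bilin (coef_gen gR exgR q) y z)"
proof
  fix W
  have coef: "(\<Sum>V\<in>candidates B D. coef_gen gL exgL q B D V * coef_gen fL exfL q V E W) =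
      (\<Sum>V\<in>candidates D E. coef_gen gR exgR q D E V * coef_gen fR exfR q B V W)"
    if "B \<in> basis" "D \<in> basis" "E \<in> basis" for B D E
    using basic[OF triple_basis[OF that, of 0 0]] basic[OF triple_basis[OF that, of 0 1]]
      basic[OF triple_basis[OF that, of 1 0]] basic[OF triple_basis[OF that, of 1 1]]
    by (simp add: coef_gen_split distrib_left distrib_right sum.distrib add_ac)
  have supps: "supp x \<subseteq> basis" "supp y \<subseteq> basis" "supp z \<subseteq> basis"
    using x y z by (auto simp: in_MMR_iff)
  have "bilin (coef_gen fL exfL q) (bilin (coef_gen gL exgL q) x y) z W =
      (\<Sum>B\<in>supp x. \<Sum>D\<in>supp y. \<Sum>E\<in>supp z. x B * y D * z E *
         (\<Sum>V\<in>candidates B D. coef_gen gL exgL q B D V * coef_gen fL exfL q V E W))"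
    by (rule bilin_left_expand[OF coef_gen_candidates x y z])
  also have "\<dots> = (\<Sum>B\<in>supp x. \<Sum>D\<in>supp y. \<Sum>E\<in>supp z. x B * y D * z E *
         (\<Sum>V\<in>candidates D E. coef_gen gR exgR q D E V * coef_gen fR exfR q B V W))"
    using supps by (intro sum.cong refl arg_cong2[where f = "(*)"] coef) auto
  also have "\<dots> = bilin (coef_gen fR exfR q) x (bilin (coef_gen gR exgR q) y z) W"
    by (rule bilin_right_expand[OF coef_gen_candidates x y z, symmetric])
  finally show "bilin (coef_gen fL exfL q) (bilin (coef_gen gL exgL q) x y) z W =
      bilin (coef_gen fR exfR q) x (bilin (coef_gen gR exgR q) y z) W" .
qed

(* For a fixed overlap, the conditions of \<prec>, \<succ> and \<cdot> split the admissible W by the shape of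
   the last block, and the exponent of \<cdot> is one less; so x \<prec> y + x \<succ> y + q x \<cdot> y has, on
   basis elements, the unconditional coefficient q ^ capn. *)
lemma coef_part_total:
  assumes B: "1 \<le> msize B" and D: "1 \<le> msize D" and e: "e \<le> 1"
  shows "coef_part e cond_prec (\<lambda>c. c) q B D V + coef_part e cond_succ (\<lambda>c. c) q B D V +
           q * coef_part e cond_dot (\<lambda>c. c - 1) q B D V =
         coef_part e (\<lambda>_ _ _. True) (\<lambda>c. c) q B D V"
proof (cases "admissible B D V (msize B + msize D - e) (second_range e (msize B) (msize D))")
  case False
  thus ?thesis by (simp add: coef_part_def)
next
  case adm: True
  define S where "S = second_range e (msize B) (msize D)"
  define X where "X = {1..msize B}"
  define N where "N = msize B + msize D - e"
  have V: "Mperm N V" using adm by (simp add: admissible_def N_def)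
  have N: "1 \<le> N" using B D e unfolding N_def by linarith
  have "last V \<noteq> {}" "last V \<subseteq> X \<union> S"
    using Mperm_last(2,3)[OF V N] unfolding X_def S_def N_def second_range_def by auto
  then consider (succ) "last V \<inter> X = {}" "last V \<inter> S \<noteq> {}"
    | (prec) "last V \<inter> X \<noteq> {}" "last V \<inter> S = {}"
    | (dot) "last V \<inter> X \<noteq> {}" "last V \<inter> S \<noteq> {}"
    by blast
  then show ?thesis
  proof cases
    case dot
    have "1 \<le> capn B V S"
      unfolding capn_meet_count X_def[symmetric] using meet_count_pos[OF Mperm_last(1)[OF V N]] dot by blast
    then have "q * q ^ (capn B V S - 1) = q ^ capn B V S"
      by (metis Suc_diff_le diff_Suc_1 power_Suc)
    with dot adm show ?thesis
      by (simp add: coef_part_def cond_prec_def cond_succ_def cond_dot_def X_def S_def)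
  qed (use adm in \<open>simp_all add: coef_part_def cond_prec_def cond_succ_def cond_dot_def X_def S_def\<close>)
qed

lemma sum_of_products:
  assumes "in_MMR y" "in_MMR z"
  shows "vadd (vadd (prec_q q y z) (succ_q q y z)) (vsmul q (dot_q q y z)) =
         bilin (coef_gen (\<lambda>_ _ _. True) (\<lambda>c. c) q) y z"
  unfolding prec_q_def succ_q_def dot_q_def vadd_bilin vsmul_bilin
proof (rule bilin_cong_basis[OF assms])
  fix B D assume "B \<in> basis" "D \<in> basis"
  note total = coef_part_total[OF basis_msize[OF this(1)] basis_msize[OF this(2)]]
  show "(\<lambda>W. coef_gen cond_prec (\<lambda>c. c) q B D W + coef_gen cond_succ (\<lambda>c. c) q B D W +
            q * coef_gen cond_dot (\<lambda>c. c - 1) q B D W) =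
        coef_gen (\<lambda>_ _ _. True) (\<lambda>c. c) q B D"
  proof
    fix W
    show "coef_gen cond_prec (\<lambda>c. c) q B D W + coef_gen cond_succ (\<lambda>c. c) q B D W +
          q * coef_gen cond_dot (\<lambda>c. c - 1) q B D W = coef_gen (\<lambda>_ _ _. True) (\<lambda>c. c) q B D W"
      unfolding coef_gen_split total[OF zero_le_one, of q W, symmetric] total[OF order_refl, of q W, symmetric]
      by (simp add: algebra_simps)
  qed
qed

lemma MMR_prec_prec:
  assumes x: "in_MMR x" and y: "in_MMR y" and z: "in_MMR z"
  shows "prec_q q (prec_q q x y) z =
         prec_q q x (vadd (vadd (prec_q q y z) (succ_q q y z)) (vsmul q (dot_q q y z)))"
  unfolding sum_of_products[OF y z] unfolding prec_q_def
  by (rule bilin_assoc[OF x y z]) (rule triple.prec_prec)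

lemma MMR_succ_prec:
  assumes x: "in_MMR x" and y: "in_MMR y" and z: "in_MMR z"
  shows "prec_q q (succ_q q x y) z = succ_q q x (prec_q q y z)"
  unfolding prec_q_def succ_q_def by (rule bilin_assoc[OF x y z]) (rule triple.succ_prec)

lemma MMR_total_succ:
  assumes x: "in_MMR x" and y: "in_MMR y" and z: "in_MMR z"
  shows "succ_q q (vadd (vadd (prec_q q x y) (succ_q q x y)) (vsmul q (dot_q q x y))) z =
         succ_q q x (succ_q q y z)"
  unfolding sum_of_products[OF x y] unfolding succ_q_def
  by (rule bilin_assoc[OF x y z]) (rule triple.total_succ)

lemma MMR_dot_dot:
  assumes x: "in_MMR x" and y: "in_MMR y" and z: "in_MMR z"
  shows "dot_q q (dot_q q x y) z = dot_q q x (dot_q q y z)"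
  unfolding dot_q_def by (rule bilin_assoc[OF x y z]) (rule triple.dot_dot)

lemma MMR_succ_dot:
  assumes x: "in_MMR x" and y: "in_MMR y" and z: "in_MMR z"
  shows "dot_q q (succ_q q x y) z = succ_q q x (dot_q q y z)"
  unfolding dot_q_def succ_q_def by (rule bilin_assoc[OF x y z]) (rule triple.succ_dot)

lemma MMR_prec_dot:
  assumes x: "in_MMR x" and y: "in_MMR y" and z: "in_MMR z"
  shows "dot_q q (prec_q q x y) z = dot_q q x (succ_q q y z)"
  unfolding dot_q_def prec_q_def succ_q_def by (rule bilin_assoc[OF x y z]) (rule triple.prec_dot)

lemma MMR_dot_prec:
  assumes x: "in_MMR x" and y: "in_MMR y" and z: "in_MMR z"
  shows "prec_q q (dot_q q x y) z = dot_q q x (prec_q q y z)"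
  unfolding dot_q_def prec_q_def by (rule bilin_assoc[OF x y z]) (rule triple.dot_prec)

theorem proposition3p3:
  fixes q :: "'k::field"
  shows "(\<forall>x y. in_MMR x \<and> in_MMR y \<longrightarrow>
            in_MMR (succ_q q x y) \<and> in_MMR (dot_q q x y) \<and> in_MMR (prec_q q x y)) \<and>
         q_tridendriform q in_MMR vadd vsmul (prec_q q) (dot_q q) (succ_q q)"
proof (intro conjI allI impI)
  fix x y :: "nat set list \<Rightarrow> 'k" assume "in_MMR x \<and> in_MMR y"
  then show "in_MMR (succ_q q x y)" "in_MMR (dot_q q x y)" "in_MMR (prec_q q x y)"
    unfolding succ_q_def dot_q_def prec_q_def by (auto intro: in_MMR_bilin coef_gen_candidates)
next
  show "q_tridendriform q in_MMR vadd vsmul (prec_q q) (dot_q q) (succ_q q)"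
    unfolding q_tridendriform_def
    by (intro allI impI, elim conjE)
      (intro conjI MMR_prec_prec MMR_succ_prec MMR_total_succ MMR_dot_dot MMR_succ_dot
        MMR_prec_dot MMR_dot_prec; assumption)
qed

end
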